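(* Let $N=2$, $\alpha>1$, and $H_\alpha=\frac{1}{\alpha}\begin{pmatrix}1&\alpha-1\\1&\alpha-1\end{pmatrix}$. Then $$\tau_t(H_\alpha)\longrightarrow\frac{\alpha^2}{2+2(\alpha-1)^2}\qquad\text{as }t\to\infty.$$
   Context: Let $X$ be a square-integrable real random variable with $\mathbb E X=\theta$ and $\mathrm{Var}(X)=\sigma^2>0$. Let $N=2$. For $i\in\{1,2\}$ and $t\geq 1$ let $X_t^{(i)}$ be random variables distributed as $X$, mutually independent over both $i$ and $t$, and write $\mathbf X_t=(X_t^{(1)},X_t^{(2)})^\top$. For a $2\times2$ stochastic matrix $A$ define $\hat{\boldsymbol\theta}_1=\mathbf X_1$ and $\hat{\boldsymbol\theta}_{t+1}=\frac{t}{t+1}A\hat{\boldsymbol\theta}_t+\frac{1}{t+1}\mathbf X_{t+1}$ for $t\geq 1$. Let $\bar{\mathbb X}_{2t}=\frac{1}{2t}\sum_{i=1}^2\sum_{k=1}^t X_k^{(i)}$, $\mathbf 1=(1,1)^\top$, $\|\cdot\|$ the Euclidean norm, and $\tau_t(A)=\dfrac{\mathbb E\|(\bar{\mathbb X}_{2t}-\theta)\mathbf 1\|^2}{\mathbb E\|\hat{\boldsymbol\theta}_t-\theta\mathbf 1\|^2}$. *)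

theory Defs
  imports "HOL-Probability.Probability"
begin

text \<open>The recursive estimator: Xv t is the random vector X_t = (X_t^(1), X_t^(2)),
  indexed by t \<ge> 1 (the value at t = 0 is irrelevant).\<close>
fun theta_hat :: "real^2^2 \<Rightarrow> (nat \<Rightarrow> 'a \<Rightarrow> real^2) \<Rightarrow> nat \<Rightarrow> 'a \<Rightarrow> real^2" where
  "theta_hat A Xv 0 \<omega> = 0"
| "theta_hat A Xv (Suc 0) \<omega> = Xv 1 \<omega>"
| "theta_hat A Xv (Suc (Suc t)) \<omega> =
     (real (Suc t) / real (Suc (Suc t))) *\<^sub>R (A *v theta_hat A Xv (Suc t) \<omega>)
     + (1 / real (Suc (Suc t))) *\<^sub>R Xv (Suc (Suc t)) \<omega>"

definition pooled_mean :: "(nat \<Rightarrow> 'a \<Rightarrow> real^2) \<Rightarrow> nat \<Rightarrow> 'a \<Rightarrow> real" where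
  "pooled_mean Xv t \<omega> = (1 / (2 * real t)) * (\<Sum>i\<in>UNIV. \<Sum>k=1..t. Xv k \<omega> $ i)"

definition ones2 :: "real^2" where
  "ones2 = (\<chi> i. 1)"

definition tau :: "'a measure \<Rightarrow> real \<Rightarrow> real^2^2 \<Rightarrow> (nat \<Rightarrow> 'a \<Rightarrow> real^2) \<Rightarrow> nat \<Rightarrow> real" where
  "tau M \<theta> A Xv t =
     (\<integral>\<omega>. (norm ((pooled_mean Xv t \<omega> - \<theta>) *\<^sub>R ones2))\<^sup>2 \<partial>M) /
     (\<integral>\<omega>. (norm (theta_hat A Xv t \<omega> - \<theta> *\<^sub>R ones2))\<^sup>2 \<partial>M)"

definition H_mat :: "real \<Rightarrow> real^2^2" where
  "H_mat \<alpha> = (\<chi> i j. if j = 1 then 1 / \<alpha> else (\<alpha> - 1) / \<alpha>)"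

end

theory Submission
  imports Defs
begin

text \<open>Every row of \<open>H\<^sub>\<alpha>\<close> is the probability vector \<open>w = (1/\<alpha>, (\<alpha>-1)/\<alpha>)\<close>, so \<open>H\<^sub>\<alpha> v\<close>
  only depends on \<open>w \<bullet> v\<close> and the recursion unrolls to
  \<open>\<theta>\<^sub>t(j) = (X\<^sub>t(j) + \<Sum>\<^bsub>k<t\<^esub> w \<bullet> X\<^sub>k) / t\<close>.
  Both estimators are therefore linear combinations of the centred observations, which are
  uncorrelated with common variance \<open>\<sigma>\<^sup>2\<close>, so their mean squared errors are \<open>\<sigma>\<^sup>2\<close> times the
  sums of the squared coefficients: \<open>\<sigma>\<^sup>2/t\<close> for the pooled mean and
  \<open>2\<sigma>\<^sup>2(1 + (t-1)|w|\<^sup>2)/t\<^sup>2\<close> for \<open>\<theta>\<^sub>t\<close>. The ratio \<open>t / (2(1 + (t-1)|w|\<^sup>2))\<close> tends to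
  \<open>1/(2|w|\<^sup>2) = \<alpha>\<^sup>2/(2 + 2(\<alpha>-1)\<^sup>2)\<close>.\<close>

lemma
  fixes f :: "'b \<Rightarrow> 'c::{banach, second_countable_topology}"
  assumes "Y \<in> M \<rightarrow>\<^sub>M N" "X \<in> M \<rightarrow>\<^sub>M N" "distr M N Y = distr M N X" "f \<in> borel_measurable N"
  shows integrable_comp_eq_if_distr_eq:
      "integrable M (\<lambda>\<omega>. f (Y \<omega>)) \<longleftrightarrow> integrable M (\<lambda>\<omega>. f (X \<omega>))"
    and integral_comp_eq_if_distr_eq: "(\<integral>\<omega>. f (Y \<omega>) \<partial>M) = (\<integral>\<omega>. f (X \<omega>) \<partial>M)"
  using assms by (metis integrable_distr_eq, metis integral_distr)

lemma (in prob_space) indep_vars_lebesgue_integral_mult: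
  fixes Y :: "'i \<Rightarrow> 'a \<Rightarrow> real"
  assumes ind: "indep_vars (\<lambda>_. borel) Y I" and "p \<in> I" "q \<in> I" "p \<noteq> q"
    and "integrable M (Y p)" "integrable M (Y q)"
  shows "integrable M (\<lambda>\<omega>. Y p \<omega> * Y q \<omega>)"
    and "(\<integral>\<omega>. Y p \<omega> * Y q \<omega> \<partial>M) = expectation (Y p) * expectation (Y q)"
proof -
  have ind_pq: "indep_vars (\<lambda>_. borel) Y {p, q}"
    using indep_vars_subset[OF ind] assms(2,3) by simp
  have "integrable M (\<lambda>\<omega>. \<Prod>r\<in>{p, q}. Y r \<omega>)"
    using ind_pq assms(5,6) by (intro indep_vars_integrable) auto
  then show "integrable M (\<lambda>\<omega>. Y p \<omega> * Y q \<omega>)"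
    using \<open>p \<noteq> q\<close> by simp
  have "(\<integral>\<omega>. (\<Prod>r\<in>{p, q}. Y r \<omega>) \<partial>M) = (\<Prod>r\<in>{p, q}. expectation (Y r))"
    using ind_pq assms(5,6) by (intro indep_vars_lebesgue_integral) auto
  then show "(\<integral>\<omega>. Y p \<omega> * Y q \<omega> \<partial>M) = expectation (Y p) * expectation (Y q)"
    using \<open>p \<noteq> q\<close> by simp
qed

lemma integral_square_sum_orthogonal:
  fixes Z :: "'i \<Rightarrow> 'a \<Rightarrow> real"
  assumes "finite I"
    and sq_int: "\<And>p. p \<in> I \<Longrightarrow> integrable M (\<lambda>\<omega>. (Z p \<omega>)\<^sup>2)"
    and sq: "\<And>p. p \<in> I \<Longrightarrow> (\<integral>\<omega>. (Z p \<omega>)\<^sup>2 \<partial>M) = s"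
    and orth_int: "\<And>p q. p \<in> I \<Longrightarrow> q \<in> I \<Longrightarrow> p \<noteq> q \<Longrightarrow> integrable M (\<lambda>\<omega>. Z p \<omega> * Z q \<omega>)"
    and orth: "\<And>p q. p \<in> I \<Longrightarrow> q \<in> I \<Longrightarrow> p \<noteq> q \<Longrightarrow> (\<integral>\<omega>. Z p \<omega> * Z q \<omega> \<partial>M) = 0"
  shows "integrable M (\<lambda>\<omega>. (\<Sum>p\<in>I. a p * Z p \<omega>)\<^sup>2)"
    and "(\<integral>\<omega>. (\<Sum>p\<in>I. a p * Z p \<omega>)\<^sup>2 \<partial>M) = s * (\<Sum>p\<in>I. (a p)\<^sup>2)"
proof -
  have expand: "(\<lambda>\<omega>. (\<Sum>p\<in>I. a p * Z p \<omega>)\<^sup>2)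
      = (\<lambda>\<omega>. \<Sum>p\<in>I. \<Sum>q\<in>I. a p * a q * (Z p \<omega> * Z q \<omega>))"
    by (auto simp: power2_eq_square sum_product intro!: sum.cong ext)
  have int: "integrable M (\<lambda>\<omega>. Z p \<omega> * Z q \<omega>)" if "p \<in> I" "q \<in> I" for p q
    using that sq_int[of p] orth_int[of p q] by (cases "p = q") (simp_all add: power2_eq_square)
  have moment: "(\<integral>\<omega>. Z p \<omega> * Z q \<omega> \<partial>M) = (if p = q then s else 0)" if "p \<in> I" "q \<in> I" for p q
    using that sq[of p] orth[of p q] by (cases "p = q") (simp_all add: power2_eq_square)
  show "integrable M (\<lambda>\<omega>. (\<Sum>p\<in>I. a p * Z p \<omega>)\<^sup>2)"
    unfolding expand by (auto intro!: integrable_sum integrable_mult_right int)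
  have "(\<integral>\<omega>. (\<Sum>p\<in>I. a p * Z p \<omega>)\<^sup>2 \<partial>M)
      = (\<Sum>p\<in>I. \<Sum>q\<in>I. a p * a q * (\<integral>\<omega>. Z p \<omega> * Z q \<omega> \<partial>M))"
    unfolding expand by (simp add: integral_sum int integrable_sum integrable_mult_right)
  also have "\<dots> = (\<Sum>p\<in>I. s * (a p)\<^sup>2)"
    using \<open>finite I\<close> by (intro sum.cong refl)
      (simp add: moment if_distrib power2_eq_square sum.delta cong: if_cong)
  finally show "(\<integral>\<omega>. (\<Sum>p\<in>I. a p * Z p \<omega>)\<^sup>2 \<partial>M) = s * (\<Sum>p\<in>I. (a p)\<^sup>2)"
    by (simp add: sum_distrib_left)
qed

lemma (in prob_space) integral_square_sum_iid:
  fixes X :: "'a \<Rightarrow> real" and Y :: "'i \<Rightarrow> 'a \<Rightarrow> real"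
  assumes X: "X \<in> borel_measurable M" "integrable M (\<lambda>\<omega>. (X \<omega>)\<^sup>2)"
    and ind: "indep_vars (\<lambda>_. borel) Y I"
    and distr: "\<And>p. p \<in> I \<Longrightarrow> distr M borel (Y p) = distr M borel X"
    and J: "finite J" "J \<subseteq> I"
  shows "integrable M (\<lambda>\<omega>. (\<Sum>p\<in>J. a p * (Y p \<omega> - expectation X))\<^sup>2)"
    and "(\<integral>\<omega>. (\<Sum>p\<in>J. a p * (Y p \<omega> - expectation X))\<^sup>2 \<partial>M) = variance X * (\<Sum>p\<in>J. (a p)\<^sup>2)"
proof -
  define Z where "Z = (\<lambda>p \<omega>. Y p \<omega> - expectation X)"
  have X_int: "integrable M X"
    using square_integrable_imp_integrable[OF X] .
  have transfer: "integrable M (\<lambda>\<omega>. f (Y p \<omega>)) \<longleftrightarrow> integrable M (\<lambda>\<omega>. f (X \<omega>))"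
      "(\<integral>\<omega>. f (Y p \<omega>) \<partial>M) = (\<integral>\<omega>. f (X \<omega>) \<partial>M)"
    if "p \<in> I" "f \<in> borel_measurable borel" for p and f :: "real \<Rightarrow> real"
  proof -
    have "Y p \<in> borel_measurable M"
      using ind \<open>p \<in> I\<close> by (simp add: indep_vars_def)
    note distr_eq = this X(1) distr[OF \<open>p \<in> I\<close>] \<open>f \<in> borel_measurable borel\<close>
    show "integrable M (\<lambda>\<omega>. f (Y p \<omega>)) \<longleftrightarrow> integrable M (\<lambda>\<omega>. f (X \<omega>))"
      by (rule integrable_comp_eq_if_distr_eq[OF distr_eq])
    show "(\<integral>\<omega>. f (Y p \<omega>) \<partial>M) = (\<integral>\<omega>. f (X \<omega>) \<partial>M)"
      by (rule integral_comp_eq_if_distr_eq[OF distr_eq])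
  qed
  have Z_int: "integrable M (Z p)" and Z_mean: "expectation (Z p) = 0" if "p \<in> I" for p
    using transfer[OF that, of "\<lambda>x. x - expectation X"] X_int by (simp_all add: Z_def prob_space)
  have Z_sq_int: "integrable M (\<lambda>\<omega>. (Z p \<omega>)\<^sup>2)" and Z_sq: "(\<integral>\<omega>. (Z p \<omega>)\<^sup>2 \<partial>M) = variance X"
    if "p \<in> I" for p
    using transfer[OF that, of "\<lambda>x. (x - expectation X)\<^sup>2"] X X_int
    by (simp_all add: Z_def power2_diff)
  have ind_Z: "indep_vars (\<lambda>_. borel) Z I"
    unfolding Z_def by (rule indep_vars_compose2[OF ind, where Y = "\<lambda>_ x. x - expectation X"]) auto
  have orth_int: "integrable M (\<lambda>\<omega>. Z p \<omega> * Z q \<omega>)"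
    and orth: "(\<integral>\<omega>. Z p \<omega> * Z q \<omega> \<partial>M) = 0"
    if "p \<in> J" "q \<in> J" "p \<noteq> q" for p q
  proof -
    have "p \<in> I" "q \<in> I" using that J(2) by auto
    note indep_vars_lebesgue_integral_mult[OF ind_Z this \<open>p \<noteq> q\<close> Z_int[OF this(1)] Z_int[OF this(2)]]
    then show "integrable M (\<lambda>\<omega>. Z p \<omega> * Z q \<omega>)" "(\<integral>\<omega>. Z p \<omega> * Z q \<omega> \<partial>M) = 0"
      using Z_mean[OF \<open>p \<in> I\<close>] by simp_all
  qed
  have "integrable M (\<lambda>\<omega>. (Z p \<omega>)\<^sup>2)" "(\<integral>\<omega>. (Z p \<omega>)\<^sup>2 \<partial>M) = variance X" if "p \<in> J" for p
    using that J(2) Z_sq_int Z_sq by blast+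
  note integral_square_sum_orthogonal[OF J(1) this orth_int orth, where a = a]
  then show "integrable M (\<lambda>\<omega>. (\<Sum>p\<in>J. a p * (Y p \<omega> - expectation X))\<^sup>2)"
    and "(\<integral>\<omega>. (\<Sum>p\<in>J. a p * (Y p \<omega> - expectation X))\<^sup>2 \<partial>M) = variance X * (\<Sum>p\<in>J. (a p)\<^sup>2)"
    by (simp_all add: Z_def)
qed

lemma norm_square_vec: "(norm (v :: real^'n))\<^sup>2 = (\<Sum>i\<in>UNIV. (v $ i)\<^sup>2)"
  unfolding power2_norm_eq_inner by (simp add: inner_vec_def power2_eq_square)

lemma matrix_vector_mult_equal_rows: "((\<chi> j. w) *v v) $ j = w \<bullet> v"
  by (simp add: matrix_vector_mult_def inner_vec_def)

lemma theta_hat_equal_rows: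
  assumes w: "(\<Sum>i\<in>UNIV. w $ i) = 1" and "t \<ge> 1"
  shows "theta_hat (\<chi> j. w) Xv t \<omega> $ j = (Xv t \<omega> $ j + (\<Sum>k\<in>{1..<t}. w \<bullet> Xv k \<omega>)) / real t"
  using \<open>t \<ge> 1\<close>
proof (induction t arbitrary: j rule: nat_induct_at_least)
  case base
  then show ?case by simp
next
  case (Suc t)
  define S where "S = (\<Sum>k\<in>{1..<t}. w \<bullet> Xv k \<omega>)"
  have "w \<bullet> theta_hat (\<chi> j. w) Xv t \<omega> = (\<Sum>i\<in>UNIV. w $ i * Xv t \<omega> $ i + w $ i * S) / real t"
    by (simp add: inner_vec_def Suc.IH S_def sum_divide_distrib algebra_simps)
  also have "\<dots> = (w \<bullet> Xv t \<omega> + S) / real t"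
    by (simp add: sum.distrib inner_vec_def w flip: sum_distrib_right)
  finally have inner_step: "w \<bullet> theta_hat (\<chi> j. w) Xv t \<omega> = (w \<bullet> Xv t \<omega> + S) / real t" .
  have "real t / real (Suc t) * ((w \<bullet> Xv t \<omega> + S) / real t) = (S + w \<bullet> Xv t \<omega>) / real (Suc t)"
    using Suc(1) by (simp add: add.commute)
  then have "theta_hat (\<chi> j. w) Xv (Suc t) \<omega> $ j = (Xv (Suc t) \<omega> $ j + (S + w \<bullet> Xv t \<omega>)) / real (Suc t)"
    using Suc(1) inner_step by (cases t) (simp_all add: matrix_vector_mult_equal_rows add_divide_distrib)
  moreover have "(\<Sum>k\<in>{1..<Suc t}. w \<bullet> Xv k \<omega>) = S + w \<bullet> Xv t \<omega>"
    using Suc(1) by (simp add: S_def)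
  ultimately show ?case
    by simp
qed

definition estimator_weight :: "real^2 \<Rightarrow> nat \<Rightarrow> 2 \<Rightarrow> nat \<times> 2 \<Rightarrow> real" where
  "estimator_weight w t j p = (if fst p = t then (if snd p = j then 1 else 0) else w $ snd p) / real t"

lemma sum_split_last_round:
  fixes t :: nat
  assumes "t \<ge> 1"
  shows "(\<Sum>p\<in>{1..t} \<times> UNIV. f p) = (\<Sum>i\<in>UNIV. f (t, i)) + (\<Sum>k\<in>{1..<t}. \<Sum>i\<in>UNIV. f (k, i))"
proof -
  have "{1..t} = insert t {1..<t}"
    using assms by auto
  then show ?thesis
    by (simp add: sum.cartesian_product')
qed

lemma theta_hat_deviation_equal_rows:
  assumes w: "(\<Sum>i\<in>UNIV. w $ i) = 1" and t: "t \<ge> 1"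
  shows "theta_hat (\<chi> j. w) Xv t \<omega> $ j - \<theta>
    = (\<Sum>p\<in>{1..t} \<times> UNIV. estimator_weight w t j p * (Xv (fst p) \<omega> $ snd p - \<theta>))"
proof -
  have last: "(\<Sum>i\<in>UNIV. estimator_weight w t j (t, i) * (Xv t \<omega> $ i - \<theta>)) = (Xv t \<omega> $ j - \<theta>) / real t"
    using exhaust_2[of j] by (auto simp: estimator_weight_def sum_2)
  have earlier: "(\<Sum>i\<in>UNIV. estimator_weight w t j (k, i) * (Xv k \<omega> $ i - \<theta>)) = (w \<bullet> Xv k \<omega> - \<theta>) / real t"
    if "k < t" for k
  proof -
    have "(\<Sum>i\<in>UNIV. estimator_weight w t j (k, i) * (Xv k \<omega> $ i - \<theta>))
        = (\<Sum>i\<in>UNIV. w $ i * Xv k \<omega> $ i - w $ i * \<theta>) / real t"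
      using that by (simp add: estimator_weight_def sum_divide_distrib right_diff_distrib diff_divide_distrib)
    also have "\<dots> = (w \<bullet> Xv k \<omega> - \<theta>) / real t"
      by (simp add: sum_subtractf inner_vec_def w flip: sum_distrib_right)
    finally show ?thesis .
  qed
  have "(\<Sum>p\<in>{1..t} \<times> UNIV. estimator_weight w t j p * (Xv (fst p) \<omega> $ snd p - \<theta>))
      = (Xv t \<omega> $ j - \<theta>) / real t + (\<Sum>k\<in>{1..<t}. (w \<bullet> Xv k \<omega> - \<theta>) / real t)"
    unfolding sum_split_last_round[OF t] by (simp add: last earlier)
  also have "\<dots> = (Xv t \<omega> $ j + (\<Sum>k\<in>{1..<t}. w \<bullet> Xv k \<omega>)) / real t - \<theta>"
    using t by (simp add: sum_subtractf field_simps flip: sum_divide_distrib)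
  finally show ?thesis
    using theta_hat_equal_rows[OF w t] by simp
qed

lemma sum_square_estimator_weight:
  assumes "t \<ge> 1"
  shows "(\<Sum>p\<in>{1..t} \<times> UNIV. (estimator_weight w t j p)\<^sup>2) = (1 + (real t - 1) * (norm w)\<^sup>2) / (real t)\<^sup>2"
proof -
  have last: "(\<Sum>i\<in>UNIV. (estimator_weight w t j (t, i))\<^sup>2) = 1 / (real t)\<^sup>2"
    using exhaust_2[of j] by (auto simp: estimator_weight_def sum_2 power_divide)
  have earlier: "(\<Sum>i\<in>UNIV. (estimator_weight w t j (k, i))\<^sup>2) = (norm w)\<^sup>2 / (real t)\<^sup>2" if "k < t" for k
    using that by (simp add: estimator_weight_def norm_square_vec power_divide sum_divide_distrib)
  show ?thesis
    unfolding sum_split_last_round[OF assms] using assms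
    by (simp add: last earlier of_nat_diff add_divide_distrib)
qed

lemma pooled_mean_deviation:
  assumes "t \<ge> 1"
  shows "pooled_mean Xv t \<omega> - \<theta> = (\<Sum>p\<in>{1..t} \<times> UNIV. 1 / (2 * real t) * (Xv (fst p) \<omega> $ snd p - \<theta>))"
proof -
  define c where "c = 1 / (2 * real t)"
  have "(\<Sum>p\<in>{1..t} \<times> UNIV. c * (Xv (fst p) \<omega> $ snd p - \<theta>))
      = c * (\<Sum>p\<in>{1..t} \<times> UNIV. Xv (fst p) \<omega> $ snd p) - c * (2 * real t) * \<theta>"
    by (simp add: right_diff_distrib sum_subtractf sum_distrib_left card_cartesian_product)
  also have "(\<Sum>p\<in>{1..t} \<times> UNIV. Xv (fst p) \<omega> $ snd p) = (\<Sum>i\<in>UNIV. \<Sum>k=1..t. Xv k \<omega> $ i)"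
    by (simp add: sum.cartesian_product') (rule sum.swap)
  also have "c * (2 * real t) = 1"
    using assms by (simp add: c_def)
  finally show ?thesis
    unfolding pooled_mean_def c_def[symmetric] by simp
qed

lemma (in prob_space) tau_equal_rows:
  fixes X :: "'a \<Rightarrow> real" and Xv :: "nat \<Rightarrow> 'a \<Rightarrow> real^2"
  assumes X: "X \<in> borel_measurable M" "integrable M (\<lambda>\<omega>. (X \<omega>)\<^sup>2)"
    and var: "variance X > 0"
    and ind: "indep_vars (\<lambda>_. borel) (\<lambda>(t, i) \<omega>. Xv t \<omega> $ i) ({1..} \<times> UNIV)"
    and distr: "\<And>t i. t \<ge> 1 \<Longrightarrow> distr M borel (\<lambda>\<omega>. Xv t \<omega> $ i) = distr M borel X"
    and w: "(\<Sum>i\<in>UNIV. w $ i) = 1" and t: "t \<ge> 1"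
  shows "tau M (expectation X) (\<chi> j. w) Xv t = real t / (2 * (1 + (real t - 1) * (norm w)\<^sup>2))"
proof -
  define \<theta> where "\<theta> = expectation X"
  define s where "s = variance X"
  define D where "D = 1 + (real t - 1) * (norm w)\<^sup>2"
  have mse: "integrable M (\<lambda>\<omega>. (\<Sum>p\<in>{1..t} \<times> UNIV. a p * (Xv (fst p) \<omega> $ snd p - \<theta>))\<^sup>2)"
    "(\<integral>\<omega>. (\<Sum>p\<in>{1..t} \<times> UNIV. a p * (Xv (fst p) \<omega> $ snd p - \<theta>))\<^sup>2 \<partial>M)
      = s * (\<Sum>p\<in>{1..t} \<times> UNIV. (a p)\<^sup>2)" for a
  proof -
    have "{1..t} \<times> UNIV \<subseteq> {1..} \<times> (UNIV :: 2 set)"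
      by auto
    moreover have "distr M borel ((\<lambda>(t, i) \<omega>. Xv t \<omega> $ i) p) = distr M borel X" if "p \<in> {1..} \<times> UNIV" for p
      using distr that by (auto simp: case_prod_beta)
    ultimately show "integrable M (\<lambda>\<omega>. (\<Sum>p\<in>{1..t} \<times> UNIV. a p * (Xv (fst p) \<omega> $ snd p - \<theta>))\<^sup>2)"
      "(\<integral>\<omega>. (\<Sum>p\<in>{1..t} \<times> UNIV. a p * (Xv (fst p) \<omega> $ snd p - \<theta>))\<^sup>2 \<partial>M)
        = s * (\<Sum>p\<in>{1..t} \<times> UNIV. (a p)\<^sup>2)"
      using integral_square_sum_iid[OF X ind, of "{1..t} \<times> UNIV" a]
      by (simp_all add: \<theta>_def s_def case_prod_beta)
  qed
  have pooled: "(\<integral>\<omega>. (norm ((pooled_mean Xv t \<omega> - \<theta>) *\<^sub>R ones2))\<^sup>2 \<partial>M) = s / real t"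
  proof -
    have "(\<integral>\<omega>. (norm ((pooled_mean Xv t \<omega> - \<theta>) *\<^sub>R ones2))\<^sup>2 \<partial>M)
        = 2 * (\<integral>\<omega>. (pooled_mean Xv t \<omega> - \<theta>)\<^sup>2 \<partial>M)"
      unfolding norm_square_vec by (simp add: ones2_def sum_2)
    also have "\<dots> = 2 * (s * (2 * real t) * (1 / (2 * real t))\<^sup>2)"
      unfolding pooled_mean_deviation[OF t] mse by (simp add: card_cartesian_product)
    also have "\<dots> = s / real t"
      using t by (simp add: power2_eq_square)
    finally show ?thesis .
  qed
  have estimator: "(\<integral>\<omega>. (norm (theta_hat (\<chi> j. w) Xv t \<omega> - \<theta> *\<^sub>R ones2))\<^sup>2 \<partial>M) = 2 * s * D / (real t)\<^sup>2"
  proof -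
    have "(\<integral>\<omega>. (norm (theta_hat (\<chi> j. w) Xv t \<omega> - \<theta> *\<^sub>R ones2))\<^sup>2 \<partial>M)
        = (\<integral>\<omega>. (\<Sum>j\<in>(UNIV :: 2 set). (theta_hat (\<chi> j. w) Xv t \<omega> $ j - \<theta>)\<^sup>2) \<partial>M)"
      by (simp add: norm_square_vec ones2_def)
    also have "\<dots> = (\<Sum>j\<in>(UNIV :: 2 set). s * D / (real t)\<^sup>2)"
      unfolding theta_hat_deviation_equal_rows[OF w t]
      by (subst Bochner_Integration.integral_sum) (simp_all only: mse sum_square_estimator_weight[OF t] flip: D_def, simp)
    finally show ?thesis
      by (simp add: sum_2)
  qed
  have "s > 0" "real t > 0"
    using var t by (simp_all add: s_def)
  moreover have "D > 0"
    using t by (simp add: D_def add_pos_nonneg)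
  ultimately show ?thesis
    unfolding tau_def \<theta>_def[symmetric] pooled estimator D_def[symmetric]
    by (simp add: field_simps power2_eq_square)
qed

lemma LIMSEQ_of_nat_div_affine:
  fixes a b :: real
  assumes "b \<noteq> 0"
  shows "(\<lambda>n. real n / (a + real n * b)) \<longlonglongrightarrow> 1 / b"
proof -
  have "(\<lambda>n. 1 / (a / real n + b)) \<longlonglongrightarrow> 1 / (0 + b)"
    using assms by (intro tendsto_intros) auto
  moreover have "\<forall>\<^sub>F n in sequentially. 1 / (a / real n + b) = real n / (a + real n * b)"
    using eventually_gt_at_top[of 0] by eventually_elim (simp add: field_simps)
  ultimately show ?thesis
    by (simp add: Lim_transform_eventually)
qed

theorem mainTheorem7:
  fixes M :: "'a measure" and X :: "'a \<Rightarrow> real" and Xv :: "nat \<Rightarrow> 'a \<Rightarrow> real^2"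
    and \<alpha> :: real
  assumes "prob_space M"
    and "X \<in> borel_measurable M"
    and "integrable M (\<lambda>\<omega>. (X \<omega>)\<^sup>2)"
    and "prob_space.variance M X > 0"
    and "prob_space.indep_vars M (\<lambda>_. borel) (\<lambda>(t, i) \<omega>. Xv t \<omega> $ i) ({1..} \<times> UNIV)"
    and "\<And>t i. t \<ge> 1 \<Longrightarrow> distr M borel (\<lambda>\<omega>. Xv t \<omega> $ i) = distr M borel X"
    and "\<alpha> > 1"
  shows "(\<lambda>t. tau M (prob_space.expectation M X) (H_mat \<alpha>) Xv t)
           \<longlonglongrightarrow> \<alpha>\<^sup>2 / (2 + 2 * (\<alpha> - 1)\<^sup>2)"
proof -
  interpret prob_space M by fact
  define w :: "real^2" where "w = (\<chi> i. if i = 1 then 1 / \<alpha> else (\<alpha> - 1) / \<alpha>)"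
  define c where "c = (norm w)\<^sup>2"
  have H: "H_mat \<alpha> = (\<chi> j. w)"
    by (simp add: H_mat_def w_def)
  have w_sum: "(\<Sum>i\<in>UNIV. w $ i) = 1" and c: "c = (1 + (\<alpha> - 1)\<^sup>2) / \<alpha>\<^sup>2"
    using \<open>\<alpha> > 1\<close> by (simp_all add: w_def c_def norm_square_vec sum_2 field_simps)
  have "\<forall>\<^sub>F t in sequentially. real t / ((2 - 2 * c) + real t * (2 * c)) = tau M (expectation X) (H_mat \<alpha>) Xv t"
    using eventually_ge_at_top[of 1]
    by eventually_elim (simp add: H tau_equal_rows[OF assms(2-6) w_sum] c_def algebra_simps)
  moreover have "c \<noteq> 0"
    using \<open>\<alpha> > 1\<close> add_pos_nonneg[of 1 "(\<alpha> - 1)\<^sup>2"] by (simp add: c)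
  ultimately have "(\<lambda>t. tau M (expectation X) (H_mat \<alpha>) Xv t) \<longlonglongrightarrow> 1 / (2 * c)"
    using LIMSEQ_of_nat_div_affine[of "2 * c" "2 - 2 * c"] Lim_transform_eventually by force
  also have "1 / (2 * c) = \<alpha>\<^sup>2 / (2 + 2 * (\<alpha> - 1)\<^sup>2)"
    using \<open>\<alpha> > 1\<close> by (simp add: c field_simps)
  finally show ?thesis .
qed

end
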